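(* If $G$ is a noncyclic finite $p$-group and $N$ is a normal subgroup of $G$ such that $\eta(G/N) = \eta(G)$, then $N \le G'$.
   Context: A cyclic subgroup $C$ of a group $G$ is maximal cyclic if there is no cyclic subgroup $D$ of $G$ with $C < D$. $\eta(G)$ denotes the number of conjugacy classes of maximal cyclic subgroups of $G$. $G'$ is the derived subgroup of $G$. *)

theory Defs
  imports "HOL-Algebra.Algebra"
begin

definition cyclic_subgroup :: "('a, 'b) monoid_scheme \<Rightarrow> 'a set \<Rightarrow> bool" where
  "cyclic_subgroup G C \<longleftrightarrow> (\<exists>g \<in> carrier G. C = generate G {g})"

definition maximal_cyclic_subgroup :: "('a, 'b) monoid_scheme \<Rightarrow> 'a set \<Rightarrow> bool" where
  "maximal_cyclic_subgroup G C \<longleftrightarrow>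
     cyclic_subgroup G C \<and> \<not> (\<exists>D. cyclic_subgroup G D \<and> C \<subset> D)"

definition conj_set :: "('a, 'b) monoid_scheme \<Rightarrow> 'a \<Rightarrow> 'a set \<Rightarrow> 'a set" where
  "conj_set G g C = (\<lambda>x. g \<otimes>\<^bsub>G\<^esub> x \<otimes>\<^bsub>G\<^esub> inv\<^bsub>G\<^esub> g) ` C"

definition conj_class :: "('a, 'b) monoid_scheme \<Rightarrow> 'a set \<Rightarrow> 'a set set" where
  "conj_class G C = (\<lambda>g. conj_set G g C) ` carrier G"

definition eta :: "('a, 'b) monoid_scheme \<Rightarrow> nat" where
  "eta G = card (conj_class G ` {C. maximal_cyclic_subgroup G C})"

end

theory Submission
  imports Defs
begin

text \<open>Suppose \<open>x \<in> N\<close> but \<open>x \<notin> G'\<close>. Taking images maps the conjugacy classes of maximal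
  cyclic subgroups of \<open>G\<close> onto those of \<open>G/N\<close>, so \<open>\<eta>(G/N) = \<eta>(G)\<close> makes this map a
  bijection. As \<open>c x\<close> and \<open>c\<close> have the same image in \<open>G/N\<close>, for every maximal cyclic
  subgroup \<open>\<langle>c\<rangle>\<close> the element \<open>c x\<close> then lies in a conjugate of \<open>\<langle>c\<rangle>\<close>. In the
  abelianization \<open>G/G'\<close> conjugation is trivial, so the image \<open>z \<noteq> 1\<close> of \<open>x\<close> lies in the
  cyclic subgroup generated by the image of \<open>c\<close>: every element of \<open>G/G'\<close> lies in a cyclic
  subgroup together with \<open>z\<close>. An abelian \<open>p\<close>-group with this property is cyclic, since all its
  elements of order \<open>p\<close> lie in \<open>\<langle>z\<rangle>\<close> and hence in the subgroup generated by an element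
  of maximal order. Finally, a \<open>p\<close>-group with cyclic abelianization is cyclic, because its
  maximal subgroups are normal and contain \<open>G'\<close>; this contradicts the hypothesis.\<close>

section \<open>Finite \<open>p\<close>-groups\<close>

lemma (in group_action) orbit_eq_singleton_iff:
  assumes "x \<in> E"
  shows "orbit G \<phi> x = {x} \<longleftrightarrow> (\<forall>g\<in>carrier G. \<phi> g x = x)"
  using orbit_refl[OF assms] unfolding orbit_def by blast

lemma (in group_action) singleton_orbits:
  "{orb\<in>orbits G E \<phi>. card orb = 1} = (\<lambda>x. {x}) ` {x\<in>E. \<forall>g\<in>carrier G. \<phi> g x = x}"
proof (intro equalityI subsetI)
  fix orb assume "orb \<in> {orb\<in>orbits G E \<phi>. card orb = 1}"
  then obtain x where x: "x \<in> E" "orb = orbit G \<phi> x" "card orb = 1"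
    unfolding orbits_def by blast
  then have "orb = {x}"
    using orbit_refl by (metis card_1_singletonE singletonD)
  with x show "orb \<in> (\<lambda>x. {x}) ` {x\<in>E. \<forall>g\<in>carrier G. \<phi> g x = x}"
    using orbit_eq_singleton_iff by blast
next
  fix orb assume "orb \<in> (\<lambda>x. {x}) ` {x\<in>E. \<forall>g\<in>carrier G. \<phi> g x = x}"
  then obtain x where "x \<in> E" "orbit G \<phi> x = {x}" "orb = {x}"
    using orbit_eq_singleton_iff by blast
  then show "orb \<in> {orb\<in>orbits G E \<phi>. card orb = 1}"
    unfolding orbits_def by auto
qed

text \<open>Orbits have \<open>p\<close>-power size, so modulo \<open>p\<close> only the singleton orbits count.\<close>
lemma (in group_action) card_fixed_points_cong:
  assumes "finite E" and "Factorial_Ring.prime p" and "order G = p ^ k"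
  shows "card E mod p = card {x\<in>E. \<forall>g\<in>carrier G. \<phi> g x = x} mod p"
proof -
  let ?O = "orbits G E \<phi>"
  have card_orbit_mod: "card orb mod p = (if card orb = 1 then 1 else 0) mod p" if orb: "orb \<in> ?O" for orb
  proof -
    obtain x where "x \<in> E" "orb = orbit G \<phi> x"
      using orb unfolding orbits_def by blast
    then have "card orb dvd p ^ k"
      using orbit_stabilizer_theorem assms(3) by (metis dvd_triv_left)
    then obtain u where "card orb = p ^ u"
      using assms(2) by (auto simp: divides_primepow_nat)
    then show ?thesis
      by (cases u) auto
  qed
  have "card E = (\<Sum>orb\<in>?O. card orb)"
    using disjoint_sum[OF assms(1), of "\<lambda>_. 1::nat"] by simp
  also have "\<dots> mod p = (\<Sum>orb\<in>?O. if card orb = 1 then 1 else 0) mod p"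
    by (metis (no_types, lifting) card_orbit_mod mod_sum_eq sum.cong)
  also have "(\<Sum>orb\<in>?O. if card orb = 1 then 1 else 0) = card {orb\<in>?O. card orb = 1}"
    using assms(1) unfolding orbits_def by (simp add: sum.If_cases Int_def)
  finally show ?thesis
    unfolding singleton_orbits by (simp add: card_image)
qed

lemma (in group) rcoset_action:
  assumes H: "subgroup H G"
  shows "group_action (G\<lparr>carrier := H\<rparr>) (rcosets H) (\<lambda>h. \<lambda>Y\<in>rcosets H. Y #> inv h)"
proof -
  let ?\<phi> = "\<lambda>h. \<lambda>Y\<in>rcosets H. Y #> inv h"
  have HG: "H \<subseteq> carrier G"
    using H subgroup.subset by blast
  have closed: "Y #> g \<in> rcosets H" if "Y \<in> rcosets H" "g \<in> carrier G" for Y g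
    using that HG by (auto simp: RCOSETS_def coset_mult_assoc)
  have sub: "Y \<subseteq> carrier G" if "Y \<in> rcosets H" for Y
    using that HG r_coset_subset_G unfolding RCOSETS_def by blast
  have bij: "?\<phi> h \<in> Bij (rcosets H)" if "h \<in> H" for h
  proof -
    have h: "h \<in> carrier G"
      using that HG by blast
    have "bij_betw (\<lambda>Y. Y #> inv h) (rcosets H) (rcosets H)"
      by (rule bij_betwI[where g = "\<lambda>Y. Y #> h"])
         (use closed sub h in \<open>auto simp: coset_mult_assoc\<close>)
    then show ?thesis
      unfolding Bij_def by simp
  qed
  have "?\<phi> (x \<otimes> y) = ?\<phi> x \<otimes>\<^bsub>BijGroup (rcosets H)\<^esub> ?\<phi> y" if "x \<in> H" "y \<in> H" for x y
  proof -
    have xy: "x \<in> carrier G" "y \<in> carrier G"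
      using that HG by auto
    have "?\<phi> x \<otimes>\<^bsub>BijGroup (rcosets H)\<^esub> ?\<phi> y = compose (rcosets H) (?\<phi> x) (?\<phi> y)"
      using bij that unfolding BijGroup_def by simp
    also have "\<dots> = ?\<phi> (x \<otimes> y)"
    proof
      fix Y
      show "compose (rcosets H) (?\<phi> x) (?\<phi> y) Y = ?\<phi> (x \<otimes> y) Y"
        using closed[of Y "inv y"] sub[of Y] xy
        by (auto simp: compose_def coset_mult_assoc inv_mult_group)
    qed
    finally show ?thesis
      by simp
  qed
  then have "?\<phi> \<in> hom (G\<lparr>carrier := H\<rparr>) (BijGroup (rcosets H))"
    using bij by (intro homI) (auto simp: BijGroup_def)
  then show ?thesis
    unfolding group_action_def group_hom_def group_hom_axioms_def
    using subgroup_imp_group[OF H] group_BijGroup by blast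
qed

lemma (in group) conj_closed_imp_normalizer:
  assumes "finite H" and H: "subgroup H G" and g: "g \<in> carrier G"
    and conj: "\<And>h. h \<in> H \<Longrightarrow> g \<otimes> h \<otimes> inv g \<in> H"
  shows "g \<in> normalizer G H"
proof -
  have HG: "H \<subseteq> carrier G"
    using H subgroup.subset by blast
  have "inj_on (\<lambda>h. g \<otimes> h \<otimes> inv g) H"
    using HG g by (intro inj_onI) (metis inv_closed l_cancel m_closed r_cancel subsetD)
  then have "(\<lambda>h. g \<otimes> h \<otimes> inv g) ` H = H"
    using conj \<open>finite H\<close> by (intro card_subset_eq) (auto simp: card_image)
  moreover have "g <# H #> inv g = (\<lambda>h. g \<otimes> h \<otimes> inv g) ` H"
    unfolding l_coset_def r_coset_def by auto
  ultimately show ?thesis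
    unfolding normalizer_def stabilizer_def using g HG by simp
qed

lemma (in group) normalizer_conj_closed:
  assumes "H \<subseteq> carrier G" and "g \<in> normalizer G H" and "h \<in> H"
  shows "g \<otimes> h \<otimes> inv g \<in> H"
proof -
  have "g <# H #> inv g = H"
    using assms(1,2) unfolding normalizer_def stabilizer_def by simp
  moreover have "g \<otimes> h \<otimes> inv g \<in> g <# H #> inv g"
    using assms(3) unfolding l_coset_def r_coset_def by blast
  ultimately show ?thesis
    by simp
qed

lemma (in group) pgroup_finite:
  assumes "Factorial_Ring.prime p" and "order G = p ^ n"
  shows "finite (carrier G)"
  using assms order_gt_0_iff_finite prime_gt_0_nat by auto

lemma (in group) pgroup_subgroup_card:
  assumes "Factorial_Ring.prime p" and "order G = p ^ n" and "subgroup H G"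
  obtains k where "card H = p ^ k"
proof -
  have "card H dvd p ^ n"
    using lagrange[OF assms(3)] assms(2) by (metis dvd_triv_right)
  then show ?thesis
    using assms(1) that by (auto simp: divides_primepow_nat)
qed

lemma (in group) pgroup_ord:
  assumes "Factorial_Ring.prime p" and "order G = p ^ n" and "y \<in> carrier G"
  obtains s where "ord y = p ^ s"
  using ord_dvd_group_order[OF assms(3)] assms(1,2) that by (auto simp: divides_primepow_nat)

lemma (in group) pgroup_quotient_order:
  assumes "Factorial_Ring.prime p" and "order G = p ^ n" and "N \<lhd> G"
  obtains m where "order (G Mod N) = p ^ m"
proof -
  have "order (G Mod N) * card N = p ^ n"
    using lagrange[OF normal_imp_subgroup[OF assms(3)]] assms(2) by (simp add: order_def FactGroup_def)
  then have "order (G Mod N) dvd p ^ n"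
    by (metis dvd_triv_left)
  then show ?thesis
    using assms(1) that by (auto simp: divides_primepow_nat)
qed

lemma (in group) pgroup_index_dvd:
  assumes p: "Factorial_Ring.prime p" and ord: "order G = p ^ n"
    and H: "subgroup H G" and proper: "H \<noteq> carrier G"
  shows "p dvd card (rcosets H)"
proof -
  have HG: "H \<subseteq> carrier G"
    using H subgroup.subset by blast
  obtain k where k: "card H = p ^ k"
    using pgroup_subgroup_card[OF p ord H] .
  have "card (rcosets H) \<noteq> 1"
    using lagrange[OF H] proper HG pgroup_finite[OF p ord] by (metis card_subset_eq mult_1 order_def)
  moreover have "card (rcosets H) dvd p ^ n"
    using lagrange[OF H] ord k by (metis dvd_triv_left)
  ultimately show ?thesis
    using p by (auto simp: divides_primepow_nat)
qed

lemma (in group) rcoset_invariant_imp_conj_closed: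
  assumes H: "subgroup H G" and g: "g \<in> carrier G"
    and invariant: "\<And>h. h \<in> H \<Longrightarrow> H #> g #> h = H #> g" and h: "h \<in> H"
  shows "g \<otimes> h \<otimes> inv g \<in> H"
proof -
  have HG: "H \<subseteq> carrier G" and hG: "h \<in> carrier G"
    using H h subgroup.subset by blast+
  have "H #> (g \<otimes> h \<otimes> inv g) = H #> g #> h #> inv g"
    using g hG HG by (simp add: coset_mult_assoc)
  also have "\<dots> = H"
    using g HG by (simp add: invariant[OF h] coset_mult_assoc)
  finally show ?thesis
    using coset_join1[OF _ _ H] g hG by simp
qed

text \<open>Normalizers grow: \<open>H\<close> acts on its right cosets, the coset \<open>H\<close> is a fixed point, and
  the number of fixed points is divisible by \<open>p\<close>; any other fixed coset \<open>H #> g\<close> gives an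
  element \<open>g \<notin> H\<close> normalizing \<open>H\<close>.\<close>
lemma (in group) pgroup_psubset_normalizer:
  assumes p: "Factorial_Ring.prime p" and ord: "order G = p ^ n"
    and H: "subgroup H G" and proper: "H \<noteq> carrier G"
  shows "H \<subset> normalizer G H"
proof -
  let ?\<phi> = "\<lambda>h. \<lambda>Y\<in>rcosets H. Y #> inv h"
  define F where "F = {Y\<in>rcosets H. \<forall>h\<in>H. ?\<phi> h Y = Y}"
  interpret A: group_action "G\<lparr>carrier := H\<rparr>" "rcosets H" ?\<phi>
    using rcoset_action[OF H] .
  have HG: "H \<subseteq> carrier G"
    using H subgroup.subset by blast
  have finH: "finite H" and finE: "finite (rcosets H)"
    using pgroup_finite[OF p ord] HG finite_subset unfolding RCOSETS_def by auto
  obtain k where "card H = p ^ k"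
    using pgroup_subgroup_card[OF p ord H] .
  then have "order (G\<lparr>carrier := H\<rparr>) = p ^ k"
    by (simp add: order_def)
  from A.card_fixed_points_cong[OF finE p this]
  have "card (rcosets H) mod p = card F mod p"
    unfolding F_def by simp
  then have "p dvd card F"
    using pgroup_index_dvd[OF p ord H proper] by (simp add: dvd_eq_mod_eq_0)
  have "H #> inv h = H" if "h \<in> H" for h
    using that HG coset_join2[OF inv_closed H subgroup.m_inv_closed[OF H]] by blast
  then have HF: "H \<in> F"
    using rcosetsI[OF HG one_closed] HG unfolding F_def by simp
  moreover have "finite F"
    using finE unfolding F_def by simp
  ultimately have "p \<le> card F"
    using \<open>p dvd card F\<close> by (intro dvd_imp_le) (auto simp: card_gt_0_iff)
  then have "\<not> F \<subseteq> {H}"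
    using prime_gt_1_nat[OF p] card_mono[of "{H}" F] by auto
  then obtain g where g: "g \<in> carrier G" "H #> g \<in> F" "H #> g \<noteq> H"
    unfolding F_def RCOSETS_def by blast
  have "H #> g #> h = H #> g" if "h \<in> H" for h
  proof -
    have "H #> g #> inv (inv h) = H #> g"
      using g(2) subgroup.m_inv_closed[OF H that] unfolding F_def by auto
    then show ?thesis
      using that HG by auto
  qed
  then have "g \<in> normalizer G H"
    using conj_closed_imp_normalizer[OF finH H g(1)] rcoset_invariant_imp_conj_closed[OF H g(1)] by blast
  moreover have "g \<notin> H"
    using g(3) coset_join2[OF g(1) H] by blast
  moreover have "H \<subseteq> normalizer G H"
    using conj_closed_imp_normalizer[OF finH H] H HG
    by (simp add: subgroup.m_closed subgroup.m_inv_closed subset_iff)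
  ultimately show ?thesis
    by blast
qed

definition maximal_subgroup :: "('a, 'b) monoid_scheme \<Rightarrow> 'a set \<Rightarrow> bool" where
  "maximal_subgroup G M \<longleftrightarrow>
     subgroup M G \<and> M \<noteq> carrier G \<and> (\<forall>K. subgroup K G \<longrightarrow> M \<subset> K \<longrightarrow> K = carrier G)"

lemma (in group) subgroup_le_maximal_subgroup:
  assumes "finite (carrier G)" and "subgroup H G" and "H \<noteq> carrier G"
  obtains M where "maximal_subgroup G M" and "H \<subseteq> M"
proof -
  let ?P = "{K. subgroup K G \<and> K \<noteq> carrier G}"
  have "finite ?P"
    using assms(1) subgroup.subset by (intro finite_subset[of ?P "Pow (carrier G)"]) auto
  then obtain M where "M \<in> ?P" "H \<subseteq> M" "\<forall>K\<in>?P. M \<subseteq> K \<longrightarrow> M = K"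
    using finite_has_maximal2[of ?P H] assms(2,3) by blast
  then have "maximal_subgroup G M"
    unfolding maximal_subgroup_def by blast
  with \<open>H \<subseteq> M\<close> show ?thesis
    using that by blast
qed

lemma (in group) pgroup_maximal_subgroup_normal:
  assumes "Factorial_Ring.prime p" and "order G = p ^ n" and M: "maximal_subgroup G M"
  shows "M \<lhd> G"
proof -
  have sub: "subgroup M G" and MG: "M \<subseteq> carrier G"
    using M subgroup.subset unfolding maximal_subgroup_def by blast+
  have "M \<subset> normalizer G M"
    using pgroup_psubset_normalizer[OF assms(1,2) sub] M unfolding maximal_subgroup_def by blast
  then have "normalizer G M = carrier G"
    using M normalizer_imp_subgroup[OF MG] unfolding maximal_subgroup_def by blast
  then show ?thesis
    using normalizer_conj_closed[OF MG] sub by (auto simp: normal_inv_iff)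
qed

lemma (in group) centralizer_subgroup:
  assumes "a \<in> carrier G"
  shows "subgroup {y\<in>carrier G. a \<otimes> y = y \<otimes> a} G"
proof (rule subgroupI)
  fix y assume "y \<in> {y\<in>carrier G. a \<otimes> y = y \<otimes> a}"
  then have y: "y \<in> carrier G" and comm: "a \<otimes> y = y \<otimes> a"
    by auto
  have "a \<otimes> inv y = inv y \<otimes> (y \<otimes> a) \<otimes> inv y"
    using assms y by (simp add: m_assoc[symmetric])
  also have "\<dots> = inv y \<otimes> a"
    using assms y by (simp add: comm[symmetric] m_assoc)
  finally show "inv y \<in> {y\<in>carrier G. a \<otimes> y = y \<otimes> a}"
    using y by simp
next
  fix y z assume "y \<in> {y\<in>carrier G. a \<otimes> y = y \<otimes> a}" "z \<in> {y\<in>carrier G. a \<otimes> y = y \<otimes> a}"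
  then show "y \<otimes> z \<in> {y\<in>carrier G. a \<otimes> y = y \<otimes> a}"
    using assms by (simp add: m_assoc[symmetric]) (simp add: m_assoc)
qed (use assms in auto)

lemma (in group_hom) subgroup_vimage:
  assumes "subgroup K H"
  shows "subgroup (h -` K \<inter> carrier G) G"
proof (rule G.subgroupI)
  have "\<one> \<in> h -` K \<inter> carrier G"
    using subgroup.one_closed[OF assms] by simp
  then show "h -` K \<inter> carrier G \<noteq> {}"
    by blast
qed (use subgroup.m_closed[OF assms] subgroup.m_inv_closed[OF assms] in auto)

lemma (in group) quotient_hom:
  assumes "N \<lhd> G"
  shows "group_hom G (G Mod N) ((#>) N)"
  using assms normal.factorgroup_is_group normal.r_coset_hom_Mod is_group
  unfolding group_hom_def group_hom_axioms_def by blast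

text \<open>Every element \<open>M #> x\<close> of \<open>G Mod M\<close> is central: its centralizer pulls back to a subgroup
  containing \<open>M\<close> and \<open>x\<close>, which is everything by maximality unless \<open>x \<in> M\<close>.\<close>
lemma (in group) derived_subset_maximal_normal_subgroup:
  assumes M: "maximal_subgroup G M" and nM: "M \<lhd> G"
  shows "derived G (carrier G) \<subseteq> M"
proof -
  interpret Q: group_hom G "G Mod M" "(#>) M"
    using quotient_hom[OF nM] .
  have sub: "subgroup M G"
    using nM normal_imp_subgroup by blast
  have central: "(M #> x) \<otimes>\<^bsub>G Mod M\<^esub> (M #> y) = (M #> y) \<otimes>\<^bsub>G Mod M\<^esub> (M #> x)"
    if x: "x \<in> carrier G" and y: "y \<in> carrier G" for x y
  proof (cases "x \<in> M")
    case True
    then have "M #> x = \<one>\<^bsub>G Mod M\<^esub>"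
      using coset_join2[OF x sub] by simp
    then show ?thesis
      using Q.hom_closed[OF y] by (metis Q.H.l_one Q.H.r_one)
  next
    case False
    let ?T = "(#>) M -` {b\<in>carrier (G Mod M). (M #> x) \<otimes>\<^bsub>G Mod M\<^esub> b = b \<otimes>\<^bsub>G Mod M\<^esub> (M #> x)}
              \<inter> carrier G"
    have T: "subgroup ?T G"
      using Q.subgroup_vimage Q.H.centralizer_subgroup Q.hom_closed[OF x] by blast
    have "M \<subseteq> ?T"
    proof
      fix h assume h: "h \<in> M"
      then have "h \<in> carrier G" and "M #> h = M #> \<one>"
        using coset_join2[OF _ sub h] sub subgroup.subset by fastforce+
      then show "h \<in> ?T"
        using subgroup.one_closed[OF T] by simp
    qed
    moreover have "x \<in> ?T"
      using x Q.hom_closed[OF x] by simp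
    ultimately have "?T = carrier G"
      using M T False unfolding maximal_subgroup_def by blast
    then show ?thesis
      using y by blast
  qed
  have "comm_group (G Mod M)"
    by (rule Q.H.group_comm_groupI) (auto simp only: carrier_FactGroup central)
  then show ?thesis
    using derived_minimal[OF nM] by blast
qed

lemma (in group) pgroup_subgroup_supplementing_derived:
  assumes p: "Factorial_Ring.prime p" and ord: "order G = p ^ n"
    and H: "subgroup H G" and supp: "carrier G \<subseteq> derived G (carrier G) <#> H"
  shows "H = carrier G"
proof (rule ccontr)
  assume "H \<noteq> carrier G"
  then obtain M where M: "maximal_subgroup G M" and "H \<subseteq> M"
    using subgroup_le_maximal_subgroup[OF pgroup_finite[OF p ord] H] by blast
  then have "derived G (carrier G) <#> H \<subseteq> M <#> M"
    using derived_subset_maximal_normal_subgroup pgroup_maximal_subgroup_normal[OF p ord]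
    by (intro mono_set_mult) auto
  also have "\<dots> = M"
    using M subgroup_mult_id unfolding maximal_subgroup_def by blast
  finally show False
    using supp M subgroup.subset unfolding maximal_subgroup_def by blast
qed

lemma (in group) cyclic_groupI_generate:
  assumes "a \<in> carrier G" and "generate G {a} = carrier G"
  shows "cyclic_group G"
proof -
  have "carrier G = range (\<lambda>k::int. a [^] k)"
    using assms generate_pow[OF assms(1)] by (simp add: full_SetCompr_eq)
  then show ?thesis
    using cyclic_group assms(1) by blast
qed

lemma (in group) pgroup_cyclic_if_abelianization_cyclic:
  assumes p: "Factorial_Ring.prime p" and ord: "order G = p ^ n"
    and cyc: "cyclic_group (G Mod derived G (carrier G))"
  shows "cyclic_group G"
proof -
  let ?D = "derived G (carrier G)"
  interpret A: group_hom G "G Mod ?D" "(#>) ?D"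
    using quotient_hom[OF derived_self_is_normal] .
  obtain c where c: "c \<in> carrier (G Mod ?D)" "carrier (G Mod ?D) = range (\<lambda>k::int. c [^]\<^bsub>G Mod ?D\<^esub> k)"
    using cyc A.H.cyclic_group by blast
  then obtain a where a: "a \<in> carrier G" "c = ?D #> a"
    unfolding carrier_FactGroup by blast
  have "carrier G \<subseteq> ?D <#> generate G {a}"
  proof
    fix g assume g: "g \<in> carrier G"
    then obtain k :: int where "?D #> g = ?D #> (a [^] k)"
      using c a A.hom_closed A.hom_int_pow by (metis imageE)
    then have "g \<in> ?D #> (a [^] k)"
      using repr_independenceD[OF derived_is_subgroup g] derived_incl by blast
    moreover have "a [^] k \<in> generate G {a}"
      using generate_pow[OF a(1)] by blast
    ultimately show "g \<in> ?D <#> generate G {a}"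
      unfolding r_coset_def set_mult_def by blast
  qed
  moreover have "subgroup (generate G {a}) G"
    using generate_is_subgroup a(1) by simp
  ultimately have "generate G {a} = carrier G"
    using pgroup_subgroup_supplementing_derived[OF p ord] by blast
  then show ?thesis
    using cyclic_groupI_generate[OF a(1)] by blast
qed

section \<open>Abelian \<open>p\<close>-groups\<close>

lemma prime_power_dvd_linear_combination:
  fixes i j :: int
  assumes p: "Factorial_Ring.prime p" and i: "int (p ^ t) dvd i * int p" and j: "\<not> int (p ^ t) dvd j"
  obtains m where "int (p ^ t) dvd i - j * m"
proof -
  have "t \<noteq> 0"
    using j by (cases t) auto
  then have "int (p ^ (t - 1)) * int p dvd i * int p"
    using i by (metis Suc_diff_1 not_gr_zero of_nat_mult power_Suc2)
  then have i': "int (p ^ (t - 1)) dvd i"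
    using p by (simp add: prime_gt_0_nat)
  define g where "g = gcd j (int (p ^ t))"
  have "nat g dvd p ^ t"
    unfolding g_def by (metis gcd_dvd2 gcd_ge_0_int nat_dvd_iff int_nat_eq nat_int)
  then obtain u where u: "u \<le> t" "nat g = p ^ u"
    using p by (auto simp: divides_primepow_nat)
  then have gu: "g = int (p ^ u)"
    unfolding g_def by (metis gcd_ge_0_int int_nat_eq)
  have "u \<noteq> t"
    using j gu unfolding g_def by (metis gcd_dvd1)
  then have "p ^ u dvd p ^ (t - 1)"
    using u by (intro le_imp_power_dvd) auto
  then have "g dvd i"
    using gu i' by (metis dvd_trans of_nat_dvd_iff)
  then obtain i'' where i'': "i = g * i''"
    by auto
  obtain a b where ab: "a * j + b * int (p ^ t) = g"
    unfolding g_def using bezout_int by blast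
  have "i - j * (a * i'') = int (p ^ t) * (b * i'')"
    unfolding i'' ab[symmetric] by (simp add: algebra_simps)
  then show ?thesis
    using that by (metis dvd_triv_left)
qed

lemma (in group) generate_singleton_subset:
  assumes "d \<in> carrier G" and "a \<in> generate G {d}"
  shows "generate G {a} \<subseteq> generate G {d}"
  using assms generate_subgroup_incl generate_is_subgroup by simp

text \<open>In a cyclic \<open>p\<close>-group the elements of exponent \<open>p\<close> form the subgroup of order \<open>p\<close>,
  which lies in every nontrivial subgroup.\<close>
lemma (in group) cyclic_pgroup_exponent_p_in_generate:
  assumes p: "Factorial_Ring.prime p" and d: "d \<in> carrier G" and ord: "ord d = p ^ t"
    and c: "c \<in> generate G {d}" "c [^] p = \<one>"
    and z: "z \<in> generate G {d}" "z \<noteq> \<one>"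
  shows "c \<in> generate G {z}"
proof -
  obtain i :: int where i: "c = d [^] i"
    using c(1) generate_pow[OF d] by auto
  obtain j :: int where j: "z = d [^] j"
    using z(1) generate_pow[OF d] by auto
  have "d [^] (i * int p) = \<one>"
    using c(2) i d by (metis int_pow_int int_pow_pow)
  then have "int (p ^ t) dvd i * int p"
    using int_pow_eq_id[OF d] ord by simp
  moreover have "\<not> int (p ^ t) dvd j"
    using int_pow_eq_id[OF d] ord z(2) j by simp
  ultimately obtain m where "int (p ^ t) dvd i - j * m"
    using prime_power_dvd_linear_combination[OF p] by blast
  then have "c = z [^] m"
    using i j d int_pow_eq[OF d, of "j * m" i] ord by (simp add: int_pow_pow)
  moreover have "z \<in> carrier G"
    using z(1) d generate_in_carrier by blast
  ultimately show ?thesis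
    using generate_pow by blast
qed

text \<open>Unless \<open>p\<close> divides \<open>k\<close>, the power \<open>a [^] k\<close> has the order of \<open>a\<close>; otherwise
  \<open>b \<otimes> inv (a [^] (k div p))\<close> has exponent \<open>p\<close>.\<close>
lemma (in comm_group) in_generate_if_pow_prime_in_generate:
  fixes k :: nat
  assumes p: "Factorial_Ring.prime p" and a: "a \<in> carrier G" "ord a = p ^ t"
    and b: "b \<in> carrier G" "b [^] p = a [^] k" "ord (b [^] p) \<noteq> ord a"
    and socle: "\<And>c. c \<in> carrier G \<Longrightarrow> c [^] p = \<one> \<Longrightarrow> c \<in> generate G {a}"
  shows "b \<in> generate G {a}"
proof -
  have "p dvd k"
  proof (rule ccontr)
    assume "\<not> p dvd k"
    then have "k \<noteq> 0" and "coprime (p ^ t) k"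
      using p by (auto simp: prime_imp_coprime intro: gr0I)
    then show False
      using b a ord_pow_gen[OF a(1), of k] by simp
  qed
  then obtain j where j: "k = p * j" ..
  have "(b \<otimes> inv (a [^] j)) [^] p = b [^] p \<otimes> inv (a [^] j) [^] p"
    using a b by (simp add: pow_mult_distrib m_comm)
  also have "\<dots> = a [^] k \<otimes> inv (a [^] k)"
    using b j a by (simp add: nat_pow_inv nat_pow_pow mult.commute)
  also have "\<dots> = \<one>"
    using a by simp
  finally have "b \<otimes> inv (a [^] j) \<in> generate G {a}"
    using socle a b by simp
  moreover have "a [^] j \<in> generate G {a}"
    using generate_pow_nat[OF a(1)] a(2) prime_gt_0_nat[OF p] by auto
  ultimately have "b \<otimes> inv (a [^] j) \<otimes> a [^] j \<in> generate G {a}"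
    by (rule generate.eng)
  then show ?thesis
    using a b by (simp add: m_assoc)
qed

lemma (in comm_group) abelian_pgroup_generate_max_order:
  assumes p: "Factorial_Ring.prime p" and ordG: "order G = p ^ n"
    and a: "a \<in> carrier G" and amax: "\<And>y. y \<in> carrier G \<Longrightarrow> ord y \<le> ord a"
    and socle: "\<And>c. c \<in> carrier G \<Longrightarrow> c [^] p = \<one> \<Longrightarrow> c \<in> generate G {a}"
  shows "carrier G = generate G {a}"
proof -
  obtain t where t: "ord a = p ^ t"
    using pgroup_ord[OF p ordG a] .
  have "b \<in> generate G {a}" if "b \<in> carrier G" for b
    using that
  proof (induction "ord b" arbitrary: b rule: less_induct)
    case (less b)
    obtain s where s: "ord b = p ^ s"
      using pgroup_ord[OF p ordG less.prems] .
    show ?case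
    proof (cases s)
      case 0
      then show ?thesis
        using s ord_eq_1 less.prems generate.one by simp
    next
      case (Suc s')
      then have "ord (b [^] p) = p ^ s'" and less_ord: "p ^ s' < ord b"
        using ord_pow[OF less.prems, of p] s prime_gt_1_nat[OF p] by auto
      then have "b [^] p \<in> generate G {a}" and "ord (b [^] p) \<noteq> ord a"
        using less.hyps less.prems amax[OF less.prems] by auto
      moreover obtain k :: nat where "b [^] p = a [^] k"
        using calculation(1) generate_pow_nat[OF a] t by (auto simp: prime_gt_0_nat[OF p])
      ultimately show ?thesis
        using in_generate_if_pow_prime_in_generate[OF p a t less.prems _ _ socle] by blast
    qed
  qed
  then show ?thesis
    using generate_in_carrier a by blast
qed

lemma (in comm_group) abelian_pgroup_cyclic_if_cyclic_with:
  assumes p: "Factorial_Ring.prime p" and ordG: "order G = p ^ n"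
    and z: "z \<in> carrier G" "z \<noteq> \<one>"
    and common: "\<And>y. y \<in> carrier G \<Longrightarrow> \<exists>d\<in>carrier G. y \<in> generate G {d} \<and> z \<in> generate G {d}"
  shows "cyclic_group G"
proof -
  have fin: "finite (carrier G)"
    using pgroup_finite[OF p ordG] .
  have "Max (ord ` carrier G) \<in> ord ` carrier G"
    using fin z(1) by (intro Max_in) auto
  then obtain a where a: "a \<in> carrier G" and ord_a: "ord a = Max (ord ` carrier G)"
    by (rule imageE) simp
  have amax: "ord y \<le> ord a" if "y \<in> carrier G" for y
    unfolding ord_a using fin that by simp
  have "z \<in> generate G {a}"
  proof -
    obtain d where d: "d \<in> carrier G" "a \<in> generate G {d}" "z \<in> generate G {d}"
      using common[OF a] by blast
    have "generate G {a} \<subseteq> generate G {d}"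
      using generate_singleton_subset[OF d(1,2)] .
    moreover have "card (generate G {d}) \<le> card (generate G {a})"
      using generate_pow_card[OF d(1)] generate_pow_card[OF a] amax[OF d(1)] by simp
    moreover have "finite (generate G {d})"
      using fin generate_in_carrier d(1) by (meson empty_subsetI finite_subset insert_subset subsetI)
    ultimately show ?thesis
      using d(3) card_seteq by blast
  qed
  have "c \<in> generate G {a}" if c: "c \<in> carrier G" "c [^] p = \<one>" for c
  proof -
    obtain d where d: "d \<in> carrier G" "c \<in> generate G {d}" "z \<in> generate G {d}"
      using common[OF c(1)] by blast
    obtain t where "ord d = p ^ t"
      using pgroup_ord[OF p ordG d(1)] .
    then have "c \<in> generate G {z}"
      using cyclic_pgroup_exponent_p_in_generate[OF p d(1) _ d(2) c(2) d(3) z(2)] by blast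
    then show ?thesis
      using generate_singleton_subset[OF a \<open>z \<in> generate G {a}\<close>] by blast
  qed
  then have "generate G {a} = carrier G"
    using abelian_pgroup_generate_max_order[OF p ordG a amax] by blast
  then show ?thesis
    using cyclic_groupI_generate[OF a] by blast
qed

section \<open>Maximal cyclic subgroups under surjective homomorphisms\<close>

lemma (in group) cyclic_subgroup_subset:
  assumes "cyclic_subgroup G C"
  shows "C \<subseteq> carrier G"
  using assms generate_in_carrier unfolding cyclic_subgroup_def by blast

lemma (in group) cyclic_subgroup_le_maximal:
  assumes "finite (carrier G)" and "g \<in> carrier G"
  obtains c where "c \<in> carrier G" and "generate G {g} \<subseteq> generate G {c}"
    and "maximal_cyclic_subgroup G (generate G {c})"
proof -
  let ?Cyc = "{C. cyclic_subgroup G C}"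
  have "finite ?Cyc"
    using assms(1) cyclic_subgroup_subset by (intro finite_subset[of ?Cyc "Pow (carrier G)"]) auto
  moreover have "generate G {g} \<in> ?Cyc"
    using assms(2) unfolding cyclic_subgroup_def by blast
  ultimately obtain C where "C \<in> ?Cyc" "generate G {g} \<subseteq> C" "\<forall>D\<in>?Cyc. C \<subseteq> D \<longrightarrow> C = D"
    using finite_has_maximal2 by blast
  moreover from this obtain c where "c \<in> carrier G" "C = generate G {c}"
    unfolding cyclic_subgroup_def by blast
  ultimately show ?thesis
    using that unfolding maximal_cyclic_subgroup_def by blast
qed

lemma (in group) conj_group_hom:
  assumes "g \<in> carrier G"
  shows "group_hom G G (\<lambda>x. g \<otimes> x \<otimes> inv g)"
proof -
  have "(\<lambda>x. g \<otimes> x \<otimes> inv g) \<in> hom G G"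
    using assms by (intro homI) (auto simp: m_assoc, simp add: m_assoc[symmetric])
  then show ?thesis
    unfolding group_hom_def group_hom_axioms_def using is_group by blast
qed

lemma (in group) conj_set_generate:
  assumes "g \<in> carrier G" and "c \<in> carrier G"
  shows "conj_set G g (generate G {c}) = generate G {g \<otimes> c \<otimes> inv g}"
  using group_hom.generate_img[OF conj_group_hom[OF assms(1)], of "{c}"] assms(2)
  unfolding conj_set_def by simp

lemma (in group) conj_set_inv:
  assumes "g \<in> carrier G" and "S \<subseteq> carrier G"
  shows "conj_set G (inv g) (conj_set G g S) = S"
proof -
  have "inv g \<otimes> (g \<otimes> x \<otimes> inv g) \<otimes> inv (inv g) = x" if "x \<in> S" for x
    using assms that by (simp add: m_assoc subsetD) (simp add: m_assoc[symmetric] subsetD)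
  then show ?thesis
    unfolding conj_set_def image_image by simp
qed

lemma (in group) cyclic_subgroup_conj:
  assumes "g \<in> carrier G" and "cyclic_subgroup G C"
  shows "cyclic_subgroup G (conj_set G g C)"
  using assms conj_set_generate unfolding cyclic_subgroup_def by auto

lemma (in group) maximal_cyclic_subgroup_conj:
  assumes g: "g \<in> carrier G" and C: "maximal_cyclic_subgroup G C"
  shows "maximal_cyclic_subgroup G (conj_set G g C)"
  unfolding maximal_cyclic_subgroup_def
proof (intro conjI notI)
  have cyc: "cyclic_subgroup G C"
    using C unfolding maximal_cyclic_subgroup_def by blast
  then show "cyclic_subgroup G (conj_set G g C)"
    using cyclic_subgroup_conj[OF g] by blast
  assume "\<exists>D. cyclic_subgroup G D \<and> conj_set G g C \<subset> D"
  then obtain D where D: "cyclic_subgroup G D" "conj_set G g C \<subset> D"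
    by blast
  have CG: "C \<subseteq> carrier G" and DG: "D \<subseteq> carrier G"
    using cyc D(1) cyclic_subgroup_subset by blast+
  have "C \<subseteq> conj_set G (inv g) D"
    using D(2) conj_set_inv[OF g CG] unfolding conj_set_def by blast
  moreover have "C \<noteq> conj_set G (inv g) D"
    using D(2) conj_set_inv[OF inv_closed[OF g] DG] g by auto
  moreover have "cyclic_subgroup G (conj_set G (inv g) D)"
    using cyclic_subgroup_conj[OF inv_closed[OF g] D(1)] .
  ultimately show False
    using C unfolding maximal_cyclic_subgroup_def by blast
qed

lemma (in group) self_in_conj_class:
  assumes "S \<subseteq> carrier G"
  shows "S \<in> conj_class G S"
proof -
  have "conj_set G \<one> S = S"
    using assms unfolding conj_set_def by (auto simp: subsetD image_iff)
  then show ?thesis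
    unfolding conj_class_def by force
qed

lemma (in group_hom) conj_set_image:
  assumes "g \<in> carrier G" and "C \<subseteq> carrier G"
  shows "conj_set H (h g) (h ` C) = h ` conj_set G g C"
  using assms unfolding conj_set_def image_image by (auto simp: subsetD intro!: image_cong)

lemma (in group_hom) conj_class_image:
  assumes surj: "h ` carrier G = carrier H" and C: "C \<subseteq> carrier G"
  shows "conj_class H (h ` C) = (`) h ` conj_class G C"
proof -
  have "conj_class H (h ` C) = (\<lambda>g. conj_set H (h g) (h ` C)) ` carrier G"
    unfolding conj_class_def surj[symmetric] image_image ..
  also have "\<dots> = (\<lambda>g. h ` conj_set G g C) ` carrier G"
    using conj_set_image[OF _ C] by simp
  finally show ?thesis
    unfolding conj_class_def image_image .
qed

lemma (in group_hom) cyclic_subgroup_image: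
  assumes "c \<in> carrier G"
  shows "cyclic_subgroup H (h ` generate G {c})"
  using assms generate_img[of "{c}"] unfolding cyclic_subgroup_def
  by (metis empty_subsetI hom_closed insert_subset image_empty image_insert)

lemma (in group_hom) maximal_cyclic_subgroup_image:
  assumes fin: "finite (carrier G)" and surj: "h ` carrier G = carrier H"
    and D: "maximal_cyclic_subgroup H D"
  obtains c where "c \<in> carrier G" and "maximal_cyclic_subgroup G (generate G {c})"
    and "D = h ` generate G {c}"
proof -
  obtain q where q: "q \<in> carrier H" "D = generate H {q}"
    using D unfolding maximal_cyclic_subgroup_def cyclic_subgroup_def by blast
  obtain g where g: "g \<in> carrier G" "D = generate H {h g}"
    using q surj by (metis imageE)
  obtain c where c: "c \<in> carrier G" "generate G {g} \<subseteq> generate G {c}"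
    "maximal_cyclic_subgroup G (generate G {c})"
    using G.cyclic_subgroup_le_maximal[OF fin g(1)] .
  have "D \<subseteq> h ` generate G {c}"
    using g c(2) generate_img[of "{g}"] by auto
  moreover have "cyclic_subgroup H (h ` generate G {c})"
    using cyclic_subgroup_image[OF c(1)] .
  ultimately have "D = h ` generate G {c}"
    using D unfolding maximal_cyclic_subgroup_def by blast
  with c show ?thesis
    using that by blast
qed

text \<open>Taking images maps the conjugacy classes of maximal cyclic subgroups of \<open>G\<close> onto those
  of \<open>H\<close>, so equality of the counts makes this map injective.\<close>
lemma (in group_hom) eta_eq_imp_bij_betw_conj_classes:
  assumes fin: "finite (carrier G)" and surj: "h ` carrier G = carrier H" and eq: "eta H = eta G"
  shows "bij_betw ((`) ((`) h)) (conj_class G ` {C. maximal_cyclic_subgroup G C})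
           (conj_class H ` {D. maximal_cyclic_subgroup H D})"
proof -
  let ?T = "conj_class G ` {C. maximal_cyclic_subgroup G C}"
  let ?T' = "conj_class H ` {D. maximal_cyclic_subgroup H D}"
  let ?F = "(`) ((`) h)"
  have onto: "?T' \<subseteq> ?F ` ?T"
  proof
    fix K assume "K \<in> ?T'"
    then obtain D where D: "maximal_cyclic_subgroup H D" "K = conj_class H D"
      by blast
    then obtain c where c: "c \<in> carrier G" "maximal_cyclic_subgroup G (generate G {c})"
      "D = h ` generate G {c}"
      using maximal_cyclic_subgroup_image[OF fin surj] by blast
    then have "K = ?F (conj_class G (generate G {c}))"
      using D(2) conj_class_image[OF surj] G.generate_incl by simp
    then show "K \<in> ?F ` ?T"
      using c(2) by blast
  qed
  have "{C. maximal_cyclic_subgroup G C} \<subseteq> Pow (carrier G)"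
    using G.cyclic_subgroup_subset unfolding maximal_cyclic_subgroup_def by blast
  then have finT: "finite ?T"
    using fin finite_subset by blast
  have "card ?T' = card ?T"
    using eq unfolding eta_def .
  moreover have "card ?T' \<le> card (?F ` ?T)" and "card (?F ` ?T) \<le> card ?T"
    using card_mono[OF finite_imageI[OF finT] onto] card_image_le[OF finT] .
  ultimately have "card (?F ` ?T) = card ?T" and "?T' = ?F ` ?T"
    using card_subset_eq[OF finite_imageI[OF finT] onto] by simp_all
  then show ?thesis
    unfolding bij_betw_def using eq_card_imp_inj_on[OF finT] by simp
qed

lemma (in group_hom) eta_eq_imp_maximal_cyclic_image:
  assumes fin: "finite (carrier G)" and surj: "h ` carrier G = carrier H" and eq: "eta H = eta G"
    and C: "maximal_cyclic_subgroup G C"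
  shows "maximal_cyclic_subgroup H (h ` C)"
proof -
  have CG: "C \<subseteq> carrier G"
    using C G.cyclic_subgroup_subset unfolding maximal_cyclic_subgroup_def by blast
  have "(`) h ` conj_class G C \<in> conj_class H ` {D. maximal_cyclic_subgroup H D}"
    using eta_eq_imp_bij_betw_conj_classes[OF fin surj eq] C unfolding bij_betw_def by blast
  then obtain D where D: "maximal_cyclic_subgroup H D" "conj_class H (h ` C) = conj_class H D"
    using conj_class_image[OF surj CG] by auto
  have "h ` C \<subseteq> carrier H"
    using CG by auto
  then have "h ` C \<in> conj_class H (h ` C)"
    by (rule H.self_in_conj_class)
  then have "h ` C \<in> conj_class H D"
    using D(2) by simp
  then obtain q where "q \<in> carrier H" "h ` C = conj_set H q D"
    unfolding conj_class_def by (rule imageE)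
  then show ?thesis
    using H.maximal_cyclic_subgroup_conj D(1) by simp
qed

lemma (in group_hom) eta_eq_imp_same_image_conj:
  assumes fin: "finite (carrier G)" and surj: "h ` carrier G = carrier H" and eq: "eta H = eta G"
    and C: "maximal_cyclic_subgroup G C" and D: "maximal_cyclic_subgroup G D"
    and img: "h ` C = h ` D"
  obtains g where "g \<in> carrier G" and "D = conj_set G g C"
proof -
  have CG: "C \<subseteq> carrier G" and DG: "D \<subseteq> carrier G"
    using C D G.cyclic_subgroup_subset unfolding maximal_cyclic_subgroup_def by blast+
  have "(`) h ` conj_class G C = (`) h ` conj_class G D"
    using conj_class_image[OF surj CG] conj_class_image[OF surj DG] img by simp
  then have "conj_class G C = conj_class G D"
    using eta_eq_imp_bij_betw_conj_classes[OF fin surj eq] C D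
    unfolding bij_betw_def by (blast dest: inj_onD)
  then have "D \<in> conj_class G C"
    using G.self_in_conj_class[OF DG] by simp
  then show ?thesis
    using that unfolding conj_class_def by (rule imageE)
qed

lemma (in group_hom) eta_eq_imp_fibre_conj:
  assumes fin: "finite (carrier G)" and surj: "h ` carrier G = carrier H" and eq: "eta H = eta G"
    and c: "c \<in> carrier G" "maximal_cyclic_subgroup G (generate G {c})"
    and y: "y \<in> carrier G" "h y = h c"
  obtains g where "g \<in> carrier G" and "y \<in> conj_set G g (generate G {c})"
proof -
  obtain d where d: "d \<in> carrier G" "generate G {y} \<subseteq> generate G {d}"
    "maximal_cyclic_subgroup G (generate G {d})"
    using G.cyclic_subgroup_le_maximal[OF fin y(1)] .
  have "h ` generate G {c} = h ` generate G {y}"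
    using generate_img[of "{c}"] generate_img[of "{y}"] c(1) y by simp
  also have "\<dots> \<subseteq> h ` generate G {d}"
    using d(2) by blast
  finally have "h ` generate G {c} = h ` generate G {d}"
    using eta_eq_imp_maximal_cyclic_image[OF fin surj eq c(2)] cyclic_subgroup_image[OF d(1)]
    unfolding maximal_cyclic_subgroup_def by blast
  then obtain g where "g \<in> carrier G" "generate G {d} = conj_set G g (generate G {c})"
    using eta_eq_imp_same_image_conj[OF fin surj eq c(2) d(3)] by blast
  moreover have "y \<in> generate G {d}"
    using d(2) generate.incl[of y "{y}" G] by blast
  ultimately show ?thesis
    using that by blast
qed

lemma (in group_hom) abelian_image_in_generate_if_conj:
  assumes "comm_group H" and c: "c \<in> carrier G" and x: "x \<in> carrier G" and g: "g \<in> carrier G"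
    and conj: "c \<otimes> x \<in> conj_set G g (generate G {c})"
  shows "h x \<in> generate H {h c}"
proof -
  interpret H: comm_group H
    using assms(1) .
  obtain w where w: "w \<in> generate G {c}" "c \<otimes> x = g \<otimes> w \<otimes> inv g"
    using conj unfolding conj_set_def by blast
  have wG: "w \<in> carrier G"
    using w(1) c G.generate_incl by blast
  have "h c \<otimes>\<^bsub>H\<^esub> h x = h (g \<otimes> w \<otimes> inv g)"
    using c x by (simp add: w(2)[symmetric])
  also have "\<dots> = h g \<otimes>\<^bsub>H\<^esub> h w \<otimes>\<^bsub>H\<^esub> inv\<^bsub>H\<^esub> h g"
    using g wG by simp
  also have "\<dots> = h w"
    using g wG by (simp add: H.m_comm[of "h g"] H.m_assoc)
  finally have "h x = inv\<^bsub>H\<^esub> h c \<otimes>\<^bsub>H\<^esub> h w"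
    using c x wG by (metis H.inv_solve_left H.m_closed hom_closed)
  moreover have "h w \<in> generate H {h c}" and "h c \<in> generate H {h c}"
    using w(1) c generate_img[of "{c}"] generate.incl[of "h c" "{h c}" H] by auto
  moreover have "subgroup (generate H {h c}) H"
    using c by (simp add: H.generate_is_subgroup)
  ultimately show ?thesis
    by (simp add: subgroup.m_closed subgroup.m_inv_closed)
qed

lemma (in group) eta_quotient_eq_imp_abelianization_cyclic_with:
  assumes fin: "finite (carrier G)" and nN: "N \<lhd> G" and eq: "eta (G Mod N) = eta G"
    and x: "x \<in> N" and y: "y \<in> carrier (G Mod derived G (carrier G))"
  shows "\<exists>d\<in>carrier (G Mod derived G (carrier G)).
           y \<in> generate (G Mod derived G (carrier G)) {d}
           \<and> derived G (carrier G) #> x \<in> generate (G Mod derived G (carrier G)) {d}"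
proof -
  let ?D = "derived G (carrier G)"
  interpret \<pi>: group_hom G "G Mod N" "(#>) N"
    using quotient_hom[OF nN] .
  interpret \<psi>: group_hom G "G Mod ?D" "(#>) ?D"
    using quotient_hom[OF derived_self_is_normal] .
  have xG: "x \<in> carrier G"
    using x nN normal_imp_subgroup subgroup.subset by blast
  obtain g where g: "g \<in> carrier G" "y = ?D #> g"
    using y unfolding carrier_FactGroup by blast
  obtain c where c: "c \<in> carrier G" "generate G {g} \<subseteq> generate G {c}"
    "maximal_cyclic_subgroup G (generate G {c})"
    using cyclic_subgroup_le_maximal[OF fin g(1)] .
  have "N #> x = \<one>\<^bsub>G Mod N\<^esub>"
    using coset_join2[OF xG normal_imp_subgroup[OF nN] x] by simp
  then have "N #> (c \<otimes> x) = N #> c"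
    using \<pi>.hom_mult[OF c(1) xG] \<pi>.hom_closed[OF c(1)] by (metis \<pi>.H.r_one)
  moreover have "(#>) N ` carrier G = carrier (G Mod N)"
    by (simp add: carrier_FactGroup)
  moreover have "c \<otimes> x \<in> carrier G"
    using c(1) xG by simp
  ultimately obtain g' where "g' \<in> carrier G" "c \<otimes> x \<in> conj_set G g' (generate G {c})"
    using \<pi>.eta_eq_imp_fibre_conj[OF fin _ eq c(1,3)] by metis
  then have "?D #> x \<in> generate (G Mod ?D) {?D #> c}"
    using \<psi>.abelian_image_in_generate_if_conj[OF derived_quot_is_comm_group c(1) xG] by blast
  moreover have "y \<in> generate (G Mod ?D) {?D #> c}"
    using g c(1,2) \<psi>.generate_img[of "{c}"] generate.incl[of g "{g}" G] by auto
  ultimately show ?thesis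
    using \<psi>.hom_closed[OF c(1)] by blast
qed

theorem corollary4p4:
  fixes G :: "('a, 'b) monoid_scheme" and N :: "'a set" and p n :: nat
  assumes "group G"
    and "finite (carrier G)"
    and "Factorial_Ring.prime p"
    and "card (carrier G) = p ^ n"
    and "\<not> cyclic_group G"
    and "N \<lhd> G"
    and "eta (G Mod N) = eta G"
  shows "N \<subseteq> derived G (carrier G)"
proof
  interpret group G
    using assms(1) .
  let ?D = "derived G (carrier G)"
  fix x assume x: "x \<in> N"
  show "x \<in> ?D"
  proof (rule ccontr)
    assume "x \<notin> ?D"
    then have nontriv: "?D #>\<^bsub>G\<^esub> x \<noteq> \<one>\<^bsub>G Mod ?D\<^esub>"
      using x assms(6) coset_join1[OF _ _ derived_is_subgroup] normal_imp_subgroup subgroup.subset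
      by fastforce
    have ord: "order G = p ^ n"
      using assms(4) by (simp add: order_def)
    obtain m where ord_ab: "order (G Mod ?D) = p ^ m"
      using pgroup_quotient_order[OF assms(3) ord derived_self_is_normal] .
    have "?D #>\<^bsub>G\<^esub> x \<in> carrier (G Mod ?D)"
      using x assms(6) normal_imp_subgroup subgroup.subset unfolding carrier_FactGroup by blast
    then have "cyclic_group (G Mod ?D)"
      using comm_group.abelian_pgroup_cyclic_if_cyclic_with[OF derived_quot_is_comm_group
          assms(3) ord_ab _ nontriv]
        eta_quotient_eq_imp_abelianization_cyclic_with[OF assms(2,6,7) x] by blast
    then show False
      using pgroup_cyclic_if_abelianization_cyclic[OF assms(3) ord] assms(5) by blast
  qed
qed

end
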